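(* Let $\mathcal{A}=(A,0^\mathcal{A},1^\mathcal{A},\land^\mathcal{A},\lor^\mathcal{A},\to^\mathcal{A})$ be an algebraic interpretation. (1) If $\mathcal{A}$ is consistent with $\vdash_\mathsf{IPC}$, then $\mathcal{A}$ is a Heyting algebra. (2) If $\mathcal{A}$ is consistent with $\vdash_\mathsf{CPC}$, then, defining $a'=a\to^\mathcal{A}0^\mathcal{A}$, the structure $(A,0^\mathcal{A},1^\mathcal{A},\land^\mathcal{A},\lor^\mathcal{A},')$ is a Boolean algebra.
   Context: The language is generated from a countably infinite set $\mathit{Prop}$ of variables by $\bot,\top,\land,\lor,\to$; $\vdash_\mathsf{IPC}$ and $\vdash_\mathsf{CPC}$ are the intuitionistic and classical propositional consequence relations. An algebraic interpretation is any structure $\mathcal{A}=(A,0^\mathcal{A},1^\mathcal{A},\land^\mathcal{A},\lor^\mathcal{A},\to^\mathcal{A})$ (two constants, three binary operations) such that the relation $a\leq^\mathcal{A}b\iff a\land^\mathcal{A}b=a$ is a partial order on $A$ having $1^\mathcal{A}$ as largest element; no other conditions are imposed. A valuation is a map $v:\mathit{Prop}\to A$, and $[\![\varphi]\!]_v$ is the value of $\varphi$ under the unique homomorphic extension of $v$ ($\bot\mapsto0^\mathcal{A}$, $\top\mapsto1^\mathcal{A}$, connectives to the corresponding operations). $\mathcal{A}$ is consistent with $\vdash$ if whenever $\psi_1,\ldots,\psi_n\vdash\varphi$, for every valuation $v$ and every $c\in A$, if $c\leq^\mathcal{A}[\![\psi_i]\!]_v$ for all $i=1,\ldots,n$ then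 $c\leq^\mathcal{A}[\![\varphi]\!]_v$ (for $n=0$ this means $[\![\varphi]\!]_v=1^\mathcal{A}$). *)

theory Defs
  imports Main
begin

datatype form =
    Var nat
  | Bot
  | Top
  | And form form
  | Or form form
  | Imp form form

inductive ipc_axiom :: "form \<Rightarrow> bool" where
  K:     "ipc_axiom (Imp p (Imp q p))"
| S:     "ipc_axiom (Imp (Imp p (Imp q r)) (Imp (Imp p q) (Imp p r)))"
| AndE1: "ipc_axiom (Imp (And p q) p)"
| AndE2: "ipc_axiom (Imp (And p q) q)"
| AndI:  "ipc_axiom (Imp p (Imp q (And p q)))"
| OrI1:  "ipc_axiom (Imp p (Or p q))"
| OrI2:  "ipc_axiom (Imp q (Or p q))"
| OrE:   "ipc_axiom (Imp (Imp p r) (Imp (Imp q r) (Imp (Or p q) r)))"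
| BotE:  "ipc_axiom (Imp Bot p)"
| TopI:  "ipc_axiom Top"

inductive cpc_axiom :: "form \<Rightarrow> bool" where
  ipc: "ipc_axiom p \<Longrightarrow> cpc_axiom p"
| lem: "cpc_axiom (Or p (Imp p Bot))"

inductive derivable :: "(form \<Rightarrow> bool) \<Rightarrow> form set \<Rightarrow> form \<Rightarrow> bool" for ax where
  hyp: "p \<in> \<Gamma> \<Longrightarrow> derivable ax \<Gamma> p"
| axm: "ax p \<Longrightarrow> derivable ax \<Gamma> p"
| mp:  "derivable ax \<Gamma> (Imp p q) \<Longrightarrow> derivable ax \<Gamma> p \<Longrightarrow> derivable ax \<Gamma> q"

definition ipc_conseq :: "form list \<Rightarrow> form \<Rightarrow> bool" where
  "ipc_conseq \<psi>s \<phi> \<longleftrightarrow> derivable ipc_axiom (set \<psi>s) \<phi>"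

definition cpc_conseq :: "form list \<Rightarrow> form \<Rightarrow> bool" where
  "cpc_conseq \<psi>s \<phi> \<longleftrightarrow> derivable cpc_axiom (set \<psi>s) \<phi>"

definition alg_le :: "('a \<Rightarrow> 'a \<Rightarrow> 'a) \<Rightarrow> 'a \<Rightarrow> 'a \<Rightarrow> bool" where
  "alg_le meet a b \<longleftrightarrow> meet a b = a"

definition alg_interp ::
  "'a \<Rightarrow> 'a \<Rightarrow> ('a \<Rightarrow> 'a \<Rightarrow> 'a) \<Rightarrow> ('a \<Rightarrow> 'a \<Rightarrow> 'a) \<Rightarrow> ('a \<Rightarrow> 'a \<Rightarrow> 'a) \<Rightarrow> bool" where
  "alg_interp zero one meet join imp \<longleftrightarrow>
     (\<forall>a. alg_le meet a a) \<and>
     (\<forall>a b. alg_le meet a b \<and> alg_le meet b a \<longrightarrow> a = b) \<and>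
     (\<forall>a b c. alg_le meet a b \<and> alg_le meet b c \<longrightarrow> alg_le meet a c) \<and>
     (\<forall>a. alg_le meet a one)"

primrec eval ::
  "'a \<Rightarrow> 'a \<Rightarrow> ('a \<Rightarrow> 'a \<Rightarrow> 'a) \<Rightarrow> ('a \<Rightarrow> 'a \<Rightarrow> 'a) \<Rightarrow> ('a \<Rightarrow> 'a \<Rightarrow> 'a)
     \<Rightarrow> (nat \<Rightarrow> 'a) \<Rightarrow> form \<Rightarrow> 'a" where
  "eval zero one meet join imp v (Var n) = v n"
| "eval zero one meet join imp v Bot = zero"
| "eval zero one meet join imp v Top = one"
| "eval zero one meet join imp v (And p q) =
     meet (eval zero one meet join imp v p) (eval zero one meet join imp v q)"
| "eval zero one meet join imp v (Or p q) =
     join (eval zero one meet join imp v p) (eval zero one meet join imp v q)"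
| "eval zero one meet join imp v (Imp p q) =
     imp (eval zero one meet join imp v p) (eval zero one meet join imp v q)"

definition consistent_with ::
  "(form list \<Rightarrow> form \<Rightarrow> bool) \<Rightarrow>
   'a \<Rightarrow> 'a \<Rightarrow> ('a \<Rightarrow> 'a \<Rightarrow> 'a) \<Rightarrow> ('a \<Rightarrow> 'a \<Rightarrow> 'a) \<Rightarrow> ('a \<Rightarrow> 'a \<Rightarrow> 'a) \<Rightarrow> bool" where
  "consistent_with conseq zero one meet join imp \<longleftrightarrow>
     (\<forall>\<psi>s \<phi>. conseq \<psi>s \<phi> \<longrightarrow>
        (\<forall>v c. (\<forall>\<psi>\<in>set \<psi>s. alg_le meet c (eval zero one meet join imp v \<psi>)) \<longrightarrow>
               alg_le meet c (eval zero one meet join imp v \<phi>)))"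

definition heyting_algebra ::
  "'a \<Rightarrow> 'a \<Rightarrow> ('a \<Rightarrow> 'a \<Rightarrow> 'a) \<Rightarrow> ('a \<Rightarrow> 'a \<Rightarrow> 'a) \<Rightarrow> ('a \<Rightarrow> 'a \<Rightarrow> 'a) \<Rightarrow> bool" where
  "heyting_algebra zero one meet join imp \<longleftrightarrow>
     semilattice meet \<and> semilattice join \<and>
     (\<forall>a b. meet a (join a b) = a) \<and>
     (\<forall>a b. join a (meet a b) = a) \<and>
     (\<forall>a. join zero a = a) \<and>
     (\<forall>a. meet one a = a) \<and>
     (\<forall>a b c. alg_le meet c (imp a b) \<longleftrightarrow> alg_le meet (meet c a) b)"

end

theory Submission
  imports Defs
begin

(* Consistency turns every IPC sequent into an inequality between the values of its premises
   and its conclusion under every valuation. A handful of short derivations therefore show that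
   meet and join are greatest lower and least upper bounds for the order of the interpretation,
   that 0 and 1 are its least and greatest elements, and that imp is residuated:
   c \<le> a \<rightarrow> b iff c \<and> a \<le> b, the direction from right to left coming from the deduction
   theorem. A residuated bounded lattice is a (distributive) Heyting algebra; if the
   interpretation is even CPC-consistent, excluded middle makes a \<rightarrow> 0 a complement of a. *)

lemma derivable_mono_axioms:
  assumes "derivable ax \<Gamma> p" and "\<And>q. ax q \<Longrightarrow> ax' q"
  shows "derivable ax' \<Gamma> p"
  using assms by (induction rule: derivable.induct) (auto intro: derivable.intros)

lemma derivable_axiom_mp: "ax (Imp p q) \<Longrightarrow> derivable ax \<Gamma> p \<Longrightarrow> derivable ax \<Gamma> q"
  by (rule derivable.mp[OF derivable.axm])

lemma derivable_imp_self:
  assumes K: "\<And>p q. ax (Imp p (Imp q p))"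
    and S: "\<And>p q r. ax (Imp (Imp p (Imp q r)) (Imp (Imp p q) (Imp p r)))"
  shows "derivable ax \<Gamma> (Imp p p)"
proof (rule derivable.mp)
  show "derivable ax \<Gamma> (Imp (Imp p (Imp p p)) (Imp p p))"
    by (rule derivable_axiom_mp, rule S, rule derivable.axm, rule K)
qed (rule derivable.axm, rule K)

lemma derivable_deduction:
  assumes K: "\<And>p q. ax (Imp p (Imp q p))"
    and S: "\<And>p q r. ax (Imp (Imp p (Imp q r)) (Imp (Imp p q) (Imp p r)))"
    and "derivable ax (insert p \<Gamma>) q"
  shows "derivable ax \<Gamma> (Imp p q)"
  using assms(3)
proof (induction "insert p \<Gamma>" q rule: derivable.induct)
  case (hyp q)
  show ?case
  proof (cases "q = p")
    case True
    then show ?thesis using derivable_imp_self[OF K S] by simp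
  next
    case False
    with hyp show ?thesis by (auto intro: derivable_axiom_mp[where ax = ax, OF K] derivable.hyp)
  qed
next
  case (axm q)
  then show ?case by (rule derivable_axiom_mp[where ax = ax, OF K derivable.axm])
next
  case (mp q r)
  show ?case by (rule derivable.mp[OF derivable_axiom_mp[where ax = ax, OF S mp(2)] mp(4)])
qed

lemma ipc_derivable_curry: "derivable ipc_axiom {z, Imp (And z x) y} (Imp x y)"
proof (rule derivable_deduction)
  let ?\<Gamma> = "insert x {z, Imp (And z x) y}"
  have zx: "derivable ipc_axiom ?\<Gamma> (And z x)"
    by (rule derivable.mp, rule derivable_axiom_mp, rule ipc_axiom.AndI) (simp_all add: derivable.hyp)
  show "derivable ipc_axiom ?\<Gamma> y"
    by (rule derivable.mp[OF derivable.hyp zx]) simp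
qed (fact ipc_axiom.K ipc_axiom.S)+

context bounded_lattice
begin

unbundle lattice_syntax

lemma alg_le_inf_iff: "alg_le (\<sqinter>) x y \<longleftrightarrow> x \<le> y"
  by (simp add: alg_le_def le_iff_inf)

context
  fixes imp :: "'a \<Rightarrow> 'a \<Rightarrow> 'a"
  assumes residuated: "\<And>a b c. c \<le> imp a b \<longleftrightarrow> c \<sqinter> a \<le> b"
begin

lemma inf_sup_distrib_residuated: "x \<sqinter> (y \<squnion> z) = x \<sqinter> y \<squnion> x \<sqinter> z"
proof (rule order.antisym)
  let ?r = "x \<sqinter> y \<squnion> x \<sqinter> z"
  have "y \<le> imp x ?r" and "z \<le> imp x ?r"
    by (simp_all add: residuated inf_commute)
  then have "y \<squnion> z \<le> imp x ?r"
    by (rule sup_least)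
  then have "(y \<squnion> z) \<sqinter> x \<le> ?r"
    by (simp only: residuated)
  then show "x \<sqinter> (y \<squnion> z) \<le> ?r"
    by (simp only: inf_commute[of x])
qed (rule distrib_inf_le)

lemma heyting_algebra_residuated: "heyting_algebra \<bottom> \<top> (\<sqinter>) (\<squnion>) imp"
  unfolding heyting_algebra_def alg_le_inf_iff
  using inf.semilattice_axioms sup.semilattice_axioms residuated by simp

lemma abstract_boolean_algebra_residuated:
  assumes "\<And>a. a \<squnion> imp a \<bottom> = \<top>"
  shows "abstract_boolean_algebra (\<sqinter>) (\<squnion>) (\<lambda>a. imp a \<bottom>) \<bottom> \<top>"
proof unfold_locales
  show "x \<sqinter> (y \<squnion> z) = x \<sqinter> y \<squnion> x \<sqinter> z" for x y z
    by (rule inf_sup_distrib_residuated)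
  then show "x \<squnion> (y \<sqinter> z) = (x \<squnion> y) \<sqinter> (x \<squnion> z)" for x y z
    by (rule distrib_imp1)
  show "x \<sqinter> imp x \<bottom> = \<bottom>" for x
    using residuated[of "imp x \<bottom>" x \<bottom>] by (simp add: inf_commute bot_unique)
qed (simp_all add: assms ac_simps)

end
end

lemma consistent_withD:
  assumes "consistent_with conseq zero one meet join imp" and "conseq \<psi>s \<phi>"
    and "\<forall>\<psi>\<in>set \<psi>s. alg_le meet c (eval zero one meet join imp v \<psi>)"
  shows "alg_le meet c (eval zero one meet join imp v \<phi>)"
  using assms unfolding consistent_with_def by blast

lemma cpc_conseq_if_ipc_conseq: "ipc_conseq \<psi>s \<phi> \<Longrightarrow> cpc_conseq \<psi>s \<phi>"
  unfolding ipc_conseq_def cpc_conseq_def by (erule derivable_mono_axioms) (rule cpc_axiom.ipc)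

lemma consistent_with_ipc_if_cpc:
  assumes "consistent_with cpc_conseq zero one meet join imp"
  shows "consistent_with ipc_conseq zero one meet join imp"
  unfolding consistent_with_def
proof (intro allI impI)
  fix \<psi>s \<phi> v c
  assume "ipc_conseq \<psi>s \<phi>" and "\<forall>\<psi>\<in>set \<psi>s. alg_le meet c (eval zero one meet join imp v \<psi>)"
  then show "alg_le meet c (eval zero one meet join imp v \<phi>)"
    by (intro consistent_withD[OF assms] cpc_conseq_if_ipc_conseq)
qed

definition alg_less :: "('a \<Rightarrow> 'a \<Rightarrow> 'a) \<Rightarrow> 'a \<Rightarrow> 'a \<Rightarrow> bool" where
  "alg_less meet a b \<longleftrightarrow> alg_le meet a b \<and> \<not> alg_le meet b a"

locale algebraic_interpretation =
  fixes zero one :: 'a and meet join imp :: "'a \<Rightarrow> 'a \<Rightarrow> 'a"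
  assumes interp: "alg_interp zero one meet join imp"
begin

lemma alg_le_refl: "alg_le meet a a"
  and alg_le_antisym: "alg_le meet a b \<Longrightarrow> alg_le meet b a \<Longrightarrow> a = b"
  and alg_le_trans: "alg_le meet a b \<Longrightarrow> alg_le meet b c \<Longrightarrow> alg_le meet a c"
  and alg_le_one: "alg_le meet a one"
  using interp unfolding alg_interp_def by blast+

lemma eq_one_if_one_le: "alg_le meet one a \<Longrightarrow> a = one"
  by (rule alg_le_antisym[OF alg_le_one])

lemma cpc_consistent_excluded_middle:
  assumes "consistent_with cpc_conseq zero one meet join imp"
  shows "join a (imp a zero) = one"
proof -
  have "cpc_conseq [] (Or (Var 0) (Imp (Var 0) Bot))"
    by (simp add: cpc_conseq_def derivable.axm cpc_axiom.lem)
  then have "alg_le meet one (eval zero one meet join imp (\<lambda>_. a) (Or (Var 0) (Imp (Var 0) Bot)))"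
    by (rule consistent_withD[OF assms]) simp
  then show ?thesis by (simp add: eq_one_if_one_le)
qed

end

locale ipc_consistent = algebraic_interpretation +
  assumes ipc: "consistent_with ipc_conseq zero one meet join imp"
begin

lemma ipc_derivable_le:
  assumes "derivable ipc_axiom (set \<psi>s) \<phi>"
    and "\<forall>\<psi>\<in>set \<psi>s. alg_le meet c (eval zero one meet join imp v \<psi>)"
  shows "alg_le meet c (eval zero one meet join imp v \<phi>)"
  using consistent_withD[OF ipc] assms by (simp add: ipc_conseq_def)

lemma meet_le_left: "alg_le meet (meet a b) a"
proof -
  have "derivable ipc_axiom {And (Var 0) (Var 1)} (Var 0)"
    by (rule derivable_axiom_mp, rule ipc_axiom.AndE1, rule derivable.hyp) simp
  then show ?thesis
    using ipc_derivable_le[of "[And (Var 0) (Var 1)]" "Var 0" "meet a b" "(!) [a, b]"]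
    by (simp add: alg_le_refl)
qed

lemma meet_le_right: "alg_le meet (meet a b) b"
proof -
  have "derivable ipc_axiom {And (Var 0) (Var 1)} (Var 1)"
    by (rule derivable_axiom_mp, rule ipc_axiom.AndE2, rule derivable.hyp) simp
  then show ?thesis
    using ipc_derivable_le[of "[And (Var 0) (Var 1)]" "Var 1" "meet a b" "(!) [a, b]"]
    by (simp add: alg_le_refl)
qed

lemma le_meet: "alg_le meet c a \<Longrightarrow> alg_le meet c b \<Longrightarrow> alg_le meet c (meet a b)"
proof -
  have "derivable ipc_axiom {Var 0, Var 1} (And (Var 0) (Var 1))"
    by (rule derivable.mp, rule derivable_axiom_mp, rule ipc_axiom.AndI) (simp_all add: derivable.hyp)
  then show "alg_le meet c a \<Longrightarrow> alg_le meet c b \<Longrightarrow> alg_le meet c (meet a b)"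
    using ipc_derivable_le[of "[Var 0, Var 1]" "And (Var 0) (Var 1)" c "(!) [a, b]"] by simp
qed

lemma le_join_left: "alg_le meet a (join a b)"
proof -
  have "derivable ipc_axiom {Var 0} (Or (Var 0) (Var 1))"
    by (rule derivable_axiom_mp, rule ipc_axiom.OrI1, rule derivable.hyp) simp
  then show ?thesis
    using ipc_derivable_le[of "[Var 0]" "Or (Var 0) (Var 1)" a "(!) [a, b]"] by (simp add: alg_le_refl)
qed

lemma le_join_right: "alg_le meet b (join a b)"
proof -
  have "derivable ipc_axiom {Var 1} (Or (Var 0) (Var 1))"
    by (rule derivable_axiom_mp, rule ipc_axiom.OrI2, rule derivable.hyp) simp
  then show ?thesis
    using ipc_derivable_le[of "[Var 1]" "Or (Var 0) (Var 1)" b "(!) [a, b]"] by (simp add: alg_le_refl)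
qed

lemma zero_le: "alg_le meet zero a"
proof -
  have "derivable ipc_axiom {Bot} (Var 0)"
    by (rule derivable_axiom_mp, rule ipc_axiom.BotE, rule derivable.hyp) simp
  then show ?thesis
    using ipc_derivable_le[of "[Bot]" "Var 0" zero "\<lambda>_. a"] by (simp add: alg_le_refl)
qed

lemma imp_eq_one_if_le:
  assumes "alg_le meet a b"
  shows "imp a b = one"
proof -
  have "derivable ipc_axiom {} (Imp (And (Var 0) (Var 1)) (Var 1))"
    by (rule derivable.axm, rule ipc_axiom.AndE2)
  then have "alg_le meet one (imp (meet a b) b)"
    using ipc_derivable_le[of "[]" "Imp (And (Var 0) (Var 1)) (Var 1)" one "(!) [a, b]"] by simp
  moreover have "meet a b = a"
    using assms by (simp add: alg_le_def)
  ultimately show ?thesis by (simp add: eq_one_if_one_le)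
qed

lemma alg_le_imp_iff: "alg_le meet c (imp a b) \<longleftrightarrow> alg_le meet (meet c a) b"
proof
  assume "alg_le meet c (imp a b)"
  then have "alg_le meet (meet c a) (imp a b)"
    using meet_le_left alg_le_trans by blast
  moreover have "derivable ipc_axiom {Imp (Var 0) (Var 1), Var 0} (Var 1)"
    by (rule derivable.mp[of _ _ "Var 0"]) (simp_all add: derivable.hyp)
  ultimately show "alg_le meet (meet c a) b"
    using meet_le_right
      ipc_derivable_le[of "[Imp (Var 0) (Var 1), Var 0]" "Var 1" "meet c a" "(!) [a, b]"]
    by simp
next
  assume "alg_le meet (meet c a) b"
  then have "imp (meet c a) b = one"
    by (rule imp_eq_one_if_le)
  then show "alg_le meet c (imp a b)"
    using ipc_derivable_curry[of "Var 2" "Var 0" "Var 1"]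
      ipc_derivable_le[of "[Var 2, Imp (And (Var 2) (Var 0)) (Var 1)]" "Imp (Var 0) (Var 1)" c
        "(!) [a, b, c]"]
    by (simp add: alg_le_refl alg_le_one)
qed

lemma join_le: "alg_le meet a c \<Longrightarrow> alg_le meet b c \<Longrightarrow> alg_le meet (join a b) c"
proof -
  let ?\<Gamma> = "{Or (Var 0) (Var 1), Imp (Var 0) (Var 2), Imp (Var 1) (Var 2)}"
  have "derivable ipc_axiom ?\<Gamma> (Var 2)"
    by (rule derivable.mp, rule derivable.mp, rule derivable_axiom_mp,
        rule ipc_axiom.OrE[of "Var 0" "Var 2" "Var 1"])
      (simp_all add: derivable.hyp)
  then show "alg_le meet a c \<Longrightarrow> alg_le meet b c \<Longrightarrow> alg_le meet (join a b) c"
    using imp_eq_one_if_le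
      ipc_derivable_le[of "[Or (Var 0) (Var 1), Imp (Var 0) (Var 2), Imp (Var 1) (Var 2)]" "Var 2"
        "join a b" "(!) [a, b, c]"]
    by (simp add: alg_le_refl alg_le_one)
qed

lemma bounded_lattice:
  "class.bounded_lattice meet (alg_le meet) (alg_less meet) join zero one"
  by unfold_locales
    (rule alg_less_def alg_le_refl alg_le_trans alg_le_antisym meet_le_left meet_le_right le_meet
      le_join_left le_join_right join_le zero_le alg_le_one; assumption)+

sublocale lattice: bounded_lattice meet "alg_le meet" "alg_less meet" join zero one
  by (rule bounded_lattice)

lemma heyting_algebra: "heyting_algebra zero one meet join imp"
  by (rule lattice.heyting_algebra_residuated) (rule alg_le_imp_iff)

lemma abstract_boolean_algebra_if_cpc_consistent:
  assumes "consistent_with cpc_conseq zero one meet join imp"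
  shows "abstract_boolean_algebra meet join (\<lambda>a. imp a zero) zero one"
  by (rule lattice.abstract_boolean_algebra_residuated)
    (rule alg_le_imp_iff cpc_consistent_excluded_middle[OF assms])+

end

theorem theorem3:
  fixes zero one :: 'a
    and meet join imp :: "'a \<Rightarrow> 'a \<Rightarrow> 'a"
  assumes "alg_interp zero one meet join imp"
  shows "(consistent_with ipc_conseq zero one meet join imp
            \<longrightarrow> heyting_algebra zero one meet join imp)
       \<and> (consistent_with cpc_conseq zero one meet join imp
            \<longrightarrow> abstract_boolean_algebra meet join (\<lambda>a. imp a zero) zero one)"
proof (intro conjI impI)
  assume "consistent_with ipc_conseq zero one meet join imp"
  then interpret ipc_consistent zero one meet join imp
    using assms by unfold_locales
  show "heyting_algebra zero one meet join imp"
    by (rule heyting_algebra)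
next
  assume cpc: "consistent_with cpc_conseq zero one meet join imp"
  then interpret ipc_consistent zero one meet join imp
    using assms consistent_with_ipc_if_cpc by unfold_locales
  show "abstract_boolean_algebra meet join (\<lambda>a. imp a zero) zero one"
    using cpc by (rule abstract_boolean_algebra_if_cpc_consistent)
qed

end
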